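(* Let $T>0$, let $u_0:[0,1]\to\mathbb{R}$ be continuous and $b:\mathbb{R}\to\mathbb{R}$ Lipschitz. For $n\in\mathbb{N}$ let $\{\theta_n(t,x),\ (t,x)\in[0,T]\times[0,1]\}$ be stochastic processes with $\theta_n\in L^2([0,T]\times[0,1])$ a.s. Suppose that $X_n(t,x)=\int_0^t\int_0^1G_{t-s}(x,y)\theta_n(s,y)\,dy\,ds$ converges in law, as $n\to\infty$, in $\mathcal{C}([0,T]\times[0,1])$, to $X(t,x)=\int_0^t\int_0^1G_{t-s}(x,y)W(ds,dy)$, where $W$ is a Brownian sheet on $[0,T]\times[0,1]$. Then the mild solutions $U_n$ of $\partial_tU_n-\partial_{xx}U_n=b(U_n)+\theta_n$ converge in law, in $\mathcal{C}([0,T]\times[0,1])$, to the mild solution $U$ of $\partial_tU-\partial_{xx}U=b(U)+\dot W$, both with initial condition $u_0$ and Dirichlet boundary conditions.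
   Context: $G_t(x,y)=2\sum_{k\ge1}\sin(k\pi x)\sin(k\pi y)e^{-k^2\pi^2 t}$ is the Green function of the heat equation on $[0,1]$ with Dirichlet boundary conditions. The mild solution $U$ is the unique continuous process adapted to the (completed) natural filtration of $W$ with, a.s. for all $(t,x)$, $U(t,x)=\int_0^1G_t(x,y)u_0(y)dy+\int_0^t\int_0^1G_{t-s}(x,y)b(U(s,y))\,dy\,ds+\int_0^t\int_0^1G_{t-s}(x,y)W(ds,dy)$ (Wiener integral); $U_n$ is the unique a.s. continuous process with $U_n(t,x)=\int_0^1G_t(x,y)u_0(y)dy+\int_0^t\int_0^1G_{t-s}(x,y)b(U_n(s,y))\,dy\,ds+\int_0^t\int_0^1G_{t-s}(x,y)\theta_n(s,y)\,dy\,ds$. *)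

theory Defs
  imports "HOL-Probability.Probability"
begin

definition rect :: "real \<Rightarrow> (real \<times> real) set" where
  "rect T = {0..T} \<times> {0..1}"

definition heatG :: "real \<Rightarrow> real \<Rightarrow> real \<Rightarrow> real" where
  "heatG t x y = 2 * (\<Sum>k. sin (real (Suc k) * pi * x) * sin (real (Suc k) * pi * y)
                           * exp (- (real (Suc k))\<^sup>2 * pi\<^sup>2 * t))"

text \<open>Heat semigroup applied to the initial datum; at t = 0 it is the identity
 (convention: the series defining the kernel does not converge at t = 0).\<close>
definition heat_sg :: "(real \<Rightarrow> real) \<Rightarrow> real \<Rightarrow> real \<Rightarrow> real" where
  "heat_sg u0 t x = (if t = 0 then u0 x
                     else set_lebesgue_integral lborel {0..1} (\<lambda>y. heatG t x y * u0 y))"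

definition heat_conv :: "(real \<times> real \<Rightarrow> real) \<Rightarrow> real \<times> real \<Rightarrow> real" where
  "heat_conv h p = (case p of (t, x) \<Rightarrow>
     set_lebesgue_integral lborel {0..t} (\<lambda>s.
       set_lebesgue_integral lborel {0..1} (\<lambda>y. heatG (t - s) x y * h (s, y))))"

definition centered_gaussian :: "'b measure \<Rightarrow> ('b \<Rightarrow> real) \<Rightarrow> real \<Rightarrow> bool" where
  "centered_gaussian N Z v \<longleftrightarrow>
     (v > 0 \<and> distributed N lborel Z (normal_density 0 (sqrt v))) \<or>
     (v = 0 \<and> Z \<in> borel_measurable N \<and> (AE \<omega> in N. Z \<omega> = 0))"

definition brownian_sheet :: "'b measure \<Rightarrow> real \<Rightarrow> ('b \<Rightarrow> real \<times> real \<Rightarrow> real) \<Rightarrow> bool" where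
  "brownian_sheet N T W \<longleftrightarrow>
     (\<forall>p\<in>rect T. (\<lambda>\<omega>. W \<omega> p) \<in> borel_measurable N) \<and>
     (\<forall>P (c :: real \<times> real \<Rightarrow> real). finite P \<and> P \<subseteq> rect T \<longrightarrow>
        centered_gaussian N (\<lambda>\<omega>. \<Sum>p\<in>P. c p * W \<omega> p)
          (\<Sum>p\<in>P. \<Sum>q\<in>P. c p * c q * min (fst p) (fst q) * min (snd p) (snd q))) \<and>
     (AE \<omega> in N. continuous_on (rect T) (W \<omega>))"

definition step_fun :: "(real \<times> real \<times> real \<times> real \<times> real) list \<Rightarrow> real \<times> real \<Rightarrow> real" where
  "step_fun R p = sum_list (map (\<lambda>(\<alpha>, a, b, c, d). \<alpha> * indicator ({a<..b} \<times> {c<..d}) p) R)"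

definition step_ok :: "real \<Rightarrow> (real \<times> real \<times> real \<times> real \<times> real) list \<Rightarrow> bool" where
  "step_ok T R \<longleftrightarrow> (\<forall>(\<alpha>, a, b, c, d)\<in>set R. 0 \<le> a \<and> a \<le> b \<and> b \<le> T \<and> 0 \<le> c \<and> c \<le> d \<and> d \<le> 1)"

text \<open>Wiener integral of a step function: W((a,b] x (c,d]) is the rectangular increment.\<close>
definition step_wiener :: "('b \<Rightarrow> real \<times> real \<Rightarrow> real) \<Rightarrow> (real \<times> real \<times> real \<times> real \<times> real) list
                           \<Rightarrow> 'b \<Rightarrow> real" where
  "step_wiener W R \<omega> = sum_list (map (\<lambda>(\<alpha>, a, b, c, d).
      \<alpha> * (W \<omega> (b, d) - W \<omega> (a, d) - W \<omega> (b, c) + W \<omega> (a, c))) R)"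

definition wiener_integral :: "'b measure \<Rightarrow> real \<Rightarrow> ('b \<Rightarrow> real \<times> real \<Rightarrow> real)
                                \<Rightarrow> (real \<times> real \<Rightarrow> real) \<Rightarrow> ('b \<Rightarrow> real) \<Rightarrow> bool" where
  "wiener_integral N T W f Y \<longleftrightarrow>
     f \<in> borel_measurable lborel \<and> Y \<in> borel_measurable N \<and>
     (\<exists>R :: nat \<Rightarrow> (real \<times> real \<times> real \<times> real \<times> real) list.
        (\<forall>k. step_ok T (R k)) \<and>
        (\<lambda>k. \<integral>\<^sup>+ p. ennreal (indicator (rect T) p * (f p - step_fun (R k) p)\<^sup>2) \<partial>lborel)
            \<longlonglongrightarrow> 0 \<and>
        (\<lambda>k. \<integral>\<^sup>+ \<omega>. ennreal ((Y \<omega> - step_wiener W (R k) \<omega>)\<^sup>2) \<partial>N) \<longlonglongrightarrow> 0)"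

definition natural_filtration :: "'b measure \<Rightarrow> ('b \<Rightarrow> real \<times> real \<Rightarrow> real) \<Rightarrow> real \<Rightarrow> 'b set set" where
  "natural_filtration N W t = sigma_sets (space N)
     {(\<lambda>\<omega>. W \<omega> (s, y)) -` A \<inter> space N | s y A. 0 \<le> s \<and> s \<le> t \<and> 0 \<le> y \<and> y \<le> 1 \<and> A \<in> sets borel}"

definition completed_natural_filtration :: "'b measure \<Rightarrow> ('b \<Rightarrow> real \<times> real \<Rightarrow> real) \<Rightarrow> real \<Rightarrow> 'b set set" where
  "completed_natural_filtration N W t =
     {A. A \<subseteq> space N \<and> (\<exists>S\<in>natural_filtration N W t. \<exists>Z\<in>null_sets N. (A - S) \<union> (S - A) \<subseteq> Z)}"

definition adapted_to :: "'b measure \<Rightarrow> real \<Rightarrow> ('b \<Rightarrow> real \<times> real \<Rightarrow> real) \<Rightarrow> ('b \<Rightarrow> real \<times> real \<Rightarrow> real) \<Rightarrow> bool" where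
  "adapted_to N T W U \<longleftrightarrow>
     (\<forall>t x A. (t, x) \<in> rect T \<and> A \<in> sets borel \<longrightarrow>
        (\<lambda>\<omega>. U \<omega> (t, x)) -` A \<inter> space N \<in> completed_natural_filtration N W t)"

text \<open>F is a bounded continuous functional on C([0,T] x [0,1]) with the sup norm
 (values of F outside C([0,T] x [0,1]) are irrelevant).\<close>
definition bdd_cont_functional :: "real \<Rightarrow> ((real \<times> real \<Rightarrow> real) \<Rightarrow> real) \<Rightarrow> bool" where
  "bdd_cont_functional T F \<longleftrightarrow>
     (\<exists>C. \<forall>f. continuous_on (rect T) f \<longrightarrow> \<bar>F f\<bar> \<le> C) \<and>
     (\<forall>f. continuous_on (rect T) f \<longrightarrow>
        (\<forall>\<epsilon>>0. \<exists>\<delta>>0. \<forall>g. continuous_on (rect T) g \<and> (\<forall>p\<in>rect T. \<bar>f p - g p\<bar> < \<delta>)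
              \<longrightarrow> \<bar>F f - F g\<bar> < \<epsilon>))"

text \<open>Expectations are taken w.r.t. the completed measures, so that F applied to
 almost surely continuous paths is measurable.\<close>
definition conv_in_law_C :: "real \<Rightarrow> (nat \<Rightarrow> 'a measure) \<Rightarrow> (nat \<Rightarrow> 'a \<Rightarrow> real \<times> real \<Rightarrow> real)
                             \<Rightarrow> 'b measure \<Rightarrow> ('b \<Rightarrow> real \<times> real \<Rightarrow> real) \<Rightarrow> bool" where
  "conv_in_law_C T M Xs N X \<longleftrightarrow>
     (\<forall>F. bdd_cont_functional T F \<longrightarrow>
        (\<lambda>n. integral\<^sup>L (completion (M n)) (\<lambda>\<omega>. F (Xs n \<omega>)))
          \<longlonglongrightarrow> integral\<^sup>L (completion N) (\<lambda>\<omega>. F (X \<omega>)))"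

end

theory Submission
  imports Defs
begin

text \<open>The mild solution is a deterministic function of the forcing: \<open>U = \<Phi>(X)\<close> and
  \<open>U\<^sub>n = \<Phi>(X\<^sub>n)\<close>, where \<open>\<Phi>(f)\<close> solves \<open>v = heat_sg u0 + G * b(v) + f\<close>. The sup over \<open>x, y\<close>
  of the kernel has a Laplace transform of order \<open>\<lambda>\<^sup>-\<^sup>1\<^sup>/\<^sup>2\<close>, so for large \<open>\<lambda>\<close> the nonlinear
  term is a contraction in the norm \<open>sup e\<^sup>-\<^sup>\<lambda>\<^sup>t |v|\<close>. Hence \<open>\<Phi>\<close> is Lipschitz for the sup norm
  on the set of forcings for which a solution exists, and that set is closed in
  \<open>C([0,T] \<times> [0,1])\<close>. For a bounded continuous functional \<open>F\<close>, Tietze's theorem extends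
  \<open>F \<circ> \<Phi>\<close> to a bounded continuous functional \<open>H\<close> on the whole space, and then
  \<open>E F(U\<^sub>n) = E H(X\<^sub>n) \<rightarrow> E H(X) = E F(U)\<close>.\<close>

section \<open>Bounds for the Dirichlet heat kernel\<close>

definition heat_mode :: "nat \<Rightarrow> real \<Rightarrow> real" where
  "heat_mode k r = exp (- (real (Suc k))\<^sup>2 * pi\<^sup>2 * r)"

definition heatG_majorant :: "real \<Rightarrow> real" where
  "heatG_majorant r = 2 * (\<Sum>k. heat_mode k r)"

lemma one_le_pi_squared: "1 \<le> pi\<^sup>2"
  using pi_gt3 by (intro one_le_power) simp

lemma abs_sin_mult_sin_mult_le:
  fixes a b e :: real
  assumes "0 \<le> e"
  shows "\<bar>sin a * sin b * e\<bar> \<le> e"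
proof -
  have "\<bar>sin a * sin b\<bar> \<le> 1"
    unfolding abs_mult by (rule mult_le_one) (auto simp: abs_sin_le_one)
  thus ?thesis using assms by (simp add: abs_mult mult_left_le_one_le)
qed

lemma heat_mode_pos: "0 < heat_mode k r"
  by (simp add: heat_mode_def)

lemma heat_mode_le_geometric:
  assumes "r > 0"
  shows "heat_mode k r \<le> exp (- r) ^ Suc k"
proof -
  have "real (Suc k) \<le> (real (Suc k))\<^sup>2" by (simp add: power2_eq_square)
  also have "\<dots> \<le> (real (Suc k))\<^sup>2 * pi\<^sup>2" using one_le_pi_squared by simp
  finally have "real (Suc k) * r \<le> (real (Suc k))\<^sup>2 * pi\<^sup>2 * r"
    using assms by (simp add: mult_right_mono)
  hence "heat_mode k r \<le> exp (- (real (Suc k) * r))" unfolding heat_mode_def by simp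
  also have "\<dots> = exp (- r) ^ Suc k"
    by (metis exp_of_nat_mult mult_minus_right)
  finally show ?thesis .
qed

lemma summable_heat_mode:
  assumes "r > 0"
  shows "summable (\<lambda>k. heat_mode k r)"
proof (rule summable_comparison_test')
  show "summable (\<lambda>k. exp (- r) ^ Suc k)"
    using assms by (simp add: summable_geometric)
  show "norm (heat_mode k r) \<le> exp (- r) ^ Suc k" for k
    using heat_mode_le_geometric[OF assms] heat_mode_pos[of k r] by simp
qed

lemma abs_heatG_term_le:
  "\<bar>sin (real (Suc k) * pi * x) * sin (real (Suc k) * pi * y)
     * exp (- (real (Suc k))\<^sup>2 * pi\<^sup>2 * r)\<bar> \<le> heat_mode k r"
  unfolding heat_mode_def by (rule abs_sin_mult_sin_mult_le) simp

lemma summable_heatG_series: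
  assumes "r > 0"
  shows "summable (\<lambda>k. sin (real (Suc k) * pi * x) * sin (real (Suc k) * pi * y)
                           * exp (- (real (Suc k))\<^sup>2 * pi\<^sup>2 * r))"
  by (rule summable_comparison_test'[OF summable_heat_mode[OF assms]])
     (simp only: real_norm_def abs_heatG_term_le)

lemma abs_heatG_le_majorant:
  assumes "r > 0"
  shows "\<bar>heatG r x y\<bar> \<le> heatG_majorant r"
proof -
  let ?f = "\<lambda>k. sin (real (Suc k) * pi * x) * sin (real (Suc k) * pi * y)
                * exp (- (real (Suc k))\<^sup>2 * pi\<^sup>2 * r)"
  have abs_summable: "summable (\<lambda>k. \<bar>?f k\<bar>)"
    by (rule summable_comparison_test'[OF summable_heat_mode[OF assms]])
       (simp only: real_norm_def abs_abs abs_heatG_term_le)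
  have "\<bar>suminf ?f\<bar> \<le> (\<Sum>k. \<bar>?f k\<bar>)"
    by (rule summable_rabs[OF abs_summable])
  also have "\<dots> \<le> (\<Sum>k. heat_mode k r)"
    by (intro suminf_le abs_heatG_term_le abs_summable summable_heat_mode[OF assms])
  finally show ?thesis unfolding heatG_def heatG_majorant_def by simp
qed

lemma heatG_majorant_nonneg:
  assumes "r > 0"
  shows "0 \<le> heatG_majorant r"
  unfolding heatG_majorant_def
  using suminf_nonneg[OF summable_heat_mode[OF assms]] heat_mode_pos by (simp add: less_imp_le)

lemma heat_integrand_measurable:
  fixes h :: "real \<times> real \<Rightarrow> real"
  assumes h: "h \<in> borel_measurable borel"
  shows "(\<lambda>(s,y). indicator {0..<t} s * indicator {0..1} y * heatG (t - s) x y * h (s,y))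
           \<in> borel_measurable (lborel \<Otimes>\<^sub>M lborel)"
proof -
  define G where "G n r y = 2 * (\<Sum>k<n. sin (real (Suc k) * pi * x) * sin (real (Suc k) * pi * y)
                           * exp (- (real (Suc k))\<^sup>2 * pi\<^sup>2 * r))" for n r y
  have G_lim: "(\<lambda>n. G n r y) \<longlonglongrightarrow> heatG r x y" if "r > 0" for r y
    unfolding G_def heatG_def
    by (intro tendsto_mult_left summable_LIMSEQ summable_heatG_series that)
  have [measurable]: "h \<in> borel_measurable (lborel \<Otimes>\<^sub>M lborel)"
    using h by (simp add: lborel_prod)
  have "(\<lambda>p. indicator {0..<t} (fst p) * indicator {0..1} (snd p) * heatG (t - fst p) x (snd p) * h p)
           \<in> borel_measurable (lborel \<Otimes>\<^sub>M lborel)"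
  proof (rule borel_measurable_LIMSEQ_real)
    fix p :: "real \<times> real"
    show "(\<lambda>n. indicator {0..<t} (fst p) * indicator {0..1} (snd p) * G n (t - fst p) (snd p) * h p)
          \<longlonglongrightarrow> indicator {0..<t} (fst p) * indicator {0..1} (snd p) * heatG (t - fst p) x (snd p) * h p"
      by (cases "fst p \<in> {0..<t}") (auto intro!: tendsto_intros G_lim)
  next
    fix n
    show "(\<lambda>p. indicator {0..<t} (fst p) * indicator {0..1} (snd p) * G n (t - fst p) (snd p) * h p)
       \<in> borel_measurable (lborel \<Otimes>\<^sub>M lborel)"
      unfolding G_def by measurable
  qed
  thus ?thesis by (simp add: case_prod_beta')
qed

definition heat_laplace_bound :: "real \<Rightarrow> real" where
  "heat_laplace_bound l = 2 * (\<Sum>k. 1 / ((real (Suc k))\<^sup>2 + l))"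

lemma summable_heat_laplace_terms:
  assumes "l \<ge> 0"
  shows "summable (\<lambda>k. 1 / ((real (Suc k))\<^sup>2 + l))"
proof (rule summable_comparison_test')
  show "summable (\<lambda>k. inverse (real (Suc k) ^ 2))"
    using inverse_power_summable[of 2, where 'a = real] by (subst summable_Suc_iff) simp
  show "norm (1 / ((real (Suc k))\<^sup>2 + l)) \<le> inverse (real (Suc k) ^ 2)" for k
    using assms by (simp add: inverse_eq_divide divide_left_mono add_pos_nonneg)
qed

lemma heat_laplace_bound_nonneg:
  assumes "l \<ge> 0"
  shows "0 \<le> heat_laplace_bound l"
  unfolding heat_laplace_bound_def
  using assms suminf_nonneg[OF summable_heat_laplace_terms[OF assms]] by simp

lemma heat_laplace_bound_square_le:
  assumes m: "m > 0"
  shows "heat_laplace_bound (m\<^sup>2) \<le> 4 / m"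
proof -
  define f where "f n = 1 / (m + real n)" for n
  have "f \<longlonglongrightarrow> 0" unfolding f_def
    by (intro tendsto_divide_0[OF tendsto_const] filterlim_at_top_imp_at_infinity
        filterlim_tendsto_add_at_top[OF tendsto_const filterlim_real_sequentially])
  hence telescope: "(\<lambda>n. 2 * (f n - f (Suc n))) sums (2 * (1 / m))"
    using sums_mult[OF telescope_sums', of f 0 2] by (simp add: f_def)
  have term_le: "1 / ((real (Suc k))\<^sup>2 + m\<^sup>2) \<le> 2 * (f k - f (Suc k))" for k
  proof -
    define a where "a = m + real k"
    have a0: "0 < a" using m by (simp add: a_def)
    have "(a + 1)\<^sup>2 = 2 * ((real (Suc k))\<^sup>2 + m\<^sup>2) - (real (Suc k) - m)\<^sup>2"
      by (simp add: a_def power2_eq_square algebra_simps)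
    hence sq: "(a + 1)\<^sup>2 \<le> 2 * ((real (Suc k))\<^sup>2 + m\<^sup>2)"
      by (smt (verit) zero_le_power2)
    have "1 / ((real (Suc k))\<^sup>2 + m\<^sup>2) \<le> 1 / ((a + 1)\<^sup>2 / 2)"
      using sq a0 m by (intro divide_left_mono mult_pos_pos add_pos_pos) auto
    also have "\<dots> \<le> 2 / (a * (a + 1))"
      using a0 by (simp add: divide_left_mono power2_eq_square)
    also have "\<dots> = 2 * (f k - f (Suc k))"
      using a0 by (simp add: f_def a_def field_simps)
    finally show ?thesis .
  qed
  have "(\<Sum>k. 1 / ((real (Suc k))\<^sup>2 + m\<^sup>2)) \<le> (\<Sum>k. 2 * (f k - f (Suc k)))"
    by (intro suminf_le term_le summable_heat_laplace_terms sums_summable[OF telescope]) simp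
  also have "\<dots> = 2 / m" using sums_unique[OF telescope] by simp
  finally show ?thesis unfolding heat_laplace_bound_def by simp
qed

lemma nn_integral_exp_convolution_le:
  fixes a l t :: real
  assumes t: "0 \<le> t" and al: "0 < a + l"
  shows "(\<integral>\<^sup>+s. ennreal (indicator {0..t} s * (2 * exp (- a * (t - s)) * exp (l * s))) \<partial>lborel)
         \<le> ennreal (2 * exp (l * t) / (a + l))"
proof -
  define P where "P s = 2 / (a + l) * exp (- a * (t - s) + l * s)" for s
  have "(P has_real_derivative (2 / (a + l) * (exp (- a * (t - s) + l * s) * (a + l)))) (at s)" for s
    unfolding P_def by (intro DERIV_cmult DERIV_fun_exp) (auto intro!: derivative_eq_intros)
  moreover have "2 / (a + l) * (exp (- a * (t - s) + l * s) * (a + l))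
               = 2 * exp (- a * (t - s)) * exp (l * s)" for s
    using al unfolding exp_add by simp
  ultimately have "(P has_vector_derivative (2 * exp (- a * (t - s)) * exp (l * s))) (at s within {0..t})" for s
    by (simp add: has_real_derivative_iff_has_vector_derivative[symmetric] has_field_derivative_at_within)
  hence "((\<lambda>s. 2 * exp (- a * (t - s)) * exp (l * s)) has_integral (P t - P 0)) {0..t}"
    by (intro fundamental_theorem_of_calculus[OF t])
  hence "(\<integral>\<^sup>+s. ennreal (indicator {0..t} s * (2 * exp (- a * (t - s)) * exp (l * s))) \<partial>lborel)
        = ennreal (P t - P 0)"
    by (intro nn_integral_has_integral_lebesgue) simp
  also have "P t - P 0 \<le> 2 * exp (l * t) / (a + l)"
    unfolding P_def using al by (simp add: divide_right_mono diff_divide_distrib)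
  finally show ?thesis by (simp add: ennreal_leI)
qed

lemma ennreal_majorant_exp_eq_suminf:
  "ennreal (indicator {0..<t} s * (heatG_majorant (t - s) * exp (l * s)))
     = (\<Sum>k. ennreal (indicator {0..<t} s *
          (2 * exp (- (real (Suc k))\<^sup>2 * pi\<^sup>2 * (t - s)) * exp (l * s))))"
proof (cases "s \<in> {0..<t}")
  case True
  hence r: "t - s > 0" by auto
  have sums: "(\<lambda>k. 2 * heat_mode k (t - s) * exp (l * s))
                sums (heatG_majorant (t - s) * exp (l * s))"
    unfolding heatG_majorant_def
    by (intro sums_mult2 sums_mult summable_sums summable_heat_mode r)
  have "ennreal (heatG_majorant (t - s) * exp (l * s))
        = (\<Sum>k. ennreal (2 * heat_mode k (t - s) * exp (l * s)))"
    unfolding sums_unique[OF sums]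
    by (rule suminf_ennreal2[symmetric]) (use heat_mode_pos sums_summable[OF sums] in \<open>auto intro: less_imp_le\<close>)
  thus ?thesis using True by (simp add: heat_mode_def)
qed simp

lemma nn_integral_majorant_exp_le:
  assumes t: "0 \<le> t" and l: "0 \<le> l"
  shows "(\<integral>\<^sup>+s. ennreal (indicator {0..<t} s * (heatG_majorant (t - s) * exp (l * s))) \<partial>lborel)
         \<le> ennreal (exp (l * t) * heat_laplace_bound l)"
proof -
  let ?term = "\<lambda>k s. ennreal (indicator {0..<t} s *
                 (2 * exp (- (real (Suc k))\<^sup>2 * pi\<^sup>2 * (t - s)) * exp (l * s)))"
  have term_le: "(\<integral>\<^sup>+s. ?term k s \<partial>lborel) \<le> ennreal (2 * exp (l * t) / ((real (Suc k))\<^sup>2 + l))"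
    for k
  proof -
    define a where "a = (real (Suc k))\<^sup>2 * pi\<^sup>2"
    have a_ge: "(real (Suc k))\<^sup>2 \<le> a"
      unfolding a_def using one_le_pi_squared by (simp add: mult_le_cancel_left1)
    have "0 < a" by (rule less_le_trans[OF _ a_ge]) simp
    hence al: "0 < a + l" using l by simp
    have "(\<integral>\<^sup>+s. ?term k s \<partial>lborel)
        \<le> (\<integral>\<^sup>+s. ennreal (indicator {0..t} s * (2 * exp (- a * (t - s)) * exp (l * s))) \<partial>lborel)"
      by (intro nn_integral_mono ennreal_leI) (auto simp: a_def indicator_def)
    also have "\<dots> \<le> ennreal (2 * exp (l * t) / (a + l))"
      by (rule nn_integral_exp_convolution_le[OF t al])
    also have "\<dots> \<le> ennreal (2 * exp (l * t) / ((real (Suc k))\<^sup>2 + l))"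
      using a_ge l al by (intro ennreal_leI divide_left_mono mult_pos_pos) (auto simp: add_pos_nonneg)
    finally show ?thesis .
  qed
  have summable: "summable (\<lambda>k. 2 * exp (l * t) / ((real (Suc k))\<^sup>2 + l))"
    using summable_mult[OF summable_heat_laplace_terms[OF l], of "2 * exp (l * t)"] by simp
  have "(\<integral>\<^sup>+s. ennreal (indicator {0..<t} s * (heatG_majorant (t - s) * exp (l * s))) \<partial>lborel)
      = (\<Sum>k. \<integral>\<^sup>+s. ?term k s \<partial>lborel)"
    unfolding ennreal_majorant_exp_eq_suminf by (rule nn_integral_suminf) measurable
  also have "\<dots> \<le> (\<Sum>k. ennreal (2 * exp (l * t) / ((real (Suc k))\<^sup>2 + l)))"
    by (intro suminf_le summableI term_le)
  also have "\<dots> = ennreal (\<Sum>k. 2 * exp (l * t) / ((real (Suc k))\<^sup>2 + l))"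
    by (rule suminf_ennreal2[OF _ summable]) (use l in \<open>auto simp: add_nonneg_nonneg\<close>)
  also have "(\<Sum>k. 2 * exp (l * t) / ((real (Suc k))\<^sup>2 + l)) = exp (l * t) * heat_laplace_bound l"
    unfolding heat_laplace_bound_def
    using suminf_mult[OF summable_heat_laplace_terms[OF l], of "2 * exp (l * t)"] by simp
  finally show ?thesis .
qed

lemma nn_integral_majorant_mult_exp_le:
  assumes t: "0 \<le> t" and l: "0 \<le> l" and B: "0 \<le> B"
  shows "(\<integral>\<^sup>+s. ennreal (indicator {0..<t} s * (heatG_majorant (t - s) * (B * exp (l * s)))) \<partial>lborel)
         \<le> ennreal (B * exp (l * t) * heat_laplace_bound l)"
proof -
  have "(\<integral>\<^sup>+s. ennreal (indicator {0..<t} s * (heatG_majorant (t - s) * (B * exp (l * s)))) \<partial>lborel)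
      = (\<integral>\<^sup>+s. ennreal B * ennreal (indicator {0..<t} s * (heatG_majorant (t - s) * exp (l * s))) \<partial>lborel)"
  proof (rule nn_integral_cong)
    fix s :: real
    show "ennreal (indicator {0..<t} s * (heatG_majorant (t - s) * (B * exp (l * s))))
        = ennreal B * ennreal (indicator {0..<t} s * (heatG_majorant (t - s) * exp (l * s)))"
      using B heatG_majorant_nonneg[of "t - s"]
      by (cases "s \<in> {0..<t}") (simp_all add: ennreal_mult[symmetric] mult_ac)
  qed
  also have "\<dots> = ennreal B * (\<integral>\<^sup>+s. ennreal (indicator {0..<t} s * (heatG_majorant (t - s) * exp (l * s))) \<partial>lborel)"
    by (rule nn_integral_cmult) (unfold ennreal_majorant_exp_eq_suminf, measurable)
  also have "\<dots> \<le> ennreal B * ennreal (exp (l * t) * heat_laplace_bound l)"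
    by (intro mult_left_mono nn_integral_majorant_exp_le[OF t l]) simp
  also have "\<dots> = ennreal (B * exp (l * t) * heat_laplace_bound l)"
    using B by (simp add: ennreal_mult'[symmetric] mult_ac)
  finally show ?thesis .
qed

section \<open>The space-time convolution\<close>

lemma abs_integral_le_of_nn_integral_le:
  fixes f :: "'a \<Rightarrow> real"
  assumes "(\<integral>\<^sup>+x. ennreal \<bar>f x\<bar> \<partial>M) \<le> ennreal K" "0 \<le> K"
  shows "\<bar>integral\<^sup>L M f\<bar> \<le> K"
proof (cases "integrable M f")
  case True
  have "ennreal (norm (integral\<^sup>L M f)) \<le> (\<integral>\<^sup>+x. norm (f x) \<partial>M)"
    by (rule integral_norm_bound_ennreal[OF True])
  also have "\<dots> \<le> ennreal K" using assms(1) by simp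
  finally show ?thesis using assms(2) by (simp add: ennreal_le_iff)
qed (simp add: not_integrable_integral_eq assms)

text \<open>The slice leaves out \<open>s = t\<close>, where the kernel series is taken at time 0 and diverges;
  this changes the time integral in \<open>heat_conv\<close> only on a null set.\<close>

definition heat_slice :: "real \<Rightarrow> real \<Rightarrow> (real \<times> real \<Rightarrow> real) \<Rightarrow> real \<Rightarrow> real" where
  "heat_slice t x g s =
     (\<integral>y. indicator {0..<t} s * indicator {0..1} y * heatG (t - s) x y * g (s,y) \<partial>lborel)"

lemma borel_measurable_heat_slice:
  assumes "g \<in> borel_measurable borel"
  shows "heat_slice t x g \<in> borel_measurable lborel"
  unfolding heat_slice_def
  using lborel.borel_measurable_lebesgue_integral[OF heat_integrand_measurable[OF assms, of t x]]
  by simp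

lemma nn_integral_abs_heat_integrand_le:
  fixes g :: "real \<times> real \<Rightarrow> real"
  assumes s: "s \<in> {0..<t}" and bound: "\<And>y. y \<in> {0..1} \<Longrightarrow> \<bar>g (s,y)\<bar> \<le> B"
  shows "(\<integral>\<^sup>+y. ennreal \<bar>indicator {0..<t} s * indicator {0..1} y * heatG (t - s) x y * g (s,y)\<bar> \<partial>lborel)
         \<le> ennreal (heatG_majorant (t - s) * B)"
proof -
  have r: "t - s > 0" using s by auto
  have "(\<integral>\<^sup>+y. ennreal \<bar>indicator {0..<t} s * indicator {0..1} y * heatG (t - s) x y * g (s,y)\<bar> \<partial>lborel)
      \<le> (\<integral>\<^sup>+(y::real). ennreal (heatG_majorant (t - s) * B * indicator {0..1} y) \<partial>lborel)"
  proof (rule nn_integral_mono)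
    fix y
    have "\<bar>heatG (t - s) x y * g (s,y)\<bar> \<le> heatG_majorant (t - s) * B" if "y \<in> {0..1}"
      unfolding abs_mult
      by (intro mult_mono abs_heatG_le_majorant[OF r] bound[OF that] heatG_majorant_nonneg[OF r]) simp
    thus "ennreal \<bar>indicator {0..<t} s * indicator {0..1} y * heatG (t - s) x y * g (s,y)\<bar>
          \<le> ennreal (heatG_majorant (t - s) * B * indicator {0..1} y)"
      using s by (cases "y \<in> {0..1}") (simp_all add: ennreal_leI mult.assoc)
  qed
  also have "\<dots> = (\<integral>\<^sup>+(y::real). ennreal (heatG_majorant (t - s) * B) * indicator {0..1} y \<partial>lborel)"
    by (intro nn_integral_cong) (auto simp: indicator_def)
  also have "\<dots> = ennreal (heatG_majorant (t - s) * B)"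
    by (subst nn_integral_cmult_indicator) auto
  finally show ?thesis .
qed

lemma integrable_heat_integrand:
  fixes g :: "real \<times> real \<Rightarrow> real"
  assumes g: "g \<in> borel_measurable borel" and s: "s \<in> {0..<t}"
    and bound: "\<And>y. y \<in> {0..1} \<Longrightarrow> \<bar>g (s,y)\<bar> \<le> B"
  shows "integrable lborel (\<lambda>y. indicator {0..<t} s * indicator {0..1} y * heatG (t - s) x y * g (s,y))"
proof (rule integrableI_bounded)
  show "(\<lambda>y. indicator {0..<t} s * indicator {0..1} y * heatG (t - s) x y * g (s,y)) \<in> borel_measurable lborel"
    using measurable_Pair2[OF heat_integrand_measurable[OF g, of t x], of s] by simp
  show "(\<integral>\<^sup>+y. ennreal (norm (indicator {0..<t} s * indicator {0..1} y * heatG (t - s) x y * g (s,y))) \<partial>lborel) < \<infinity>"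
    using nn_integral_abs_heat_integrand_le[of s t g B x, OF s bound] by (simp add: le_less_trans)
qed

lemma abs_heat_slice_le:
  fixes g :: "real \<times> real \<Rightarrow> real" and \<beta> :: "real \<Rightarrow> real"
  assumes bound: "\<And>s y. (s,y) \<in> rect t \<Longrightarrow> \<bar>g (s,y)\<bar> \<le> \<beta> s" and \<beta>: "\<And>s. 0 \<le> \<beta> s"
  shows "\<bar>heat_slice t x g s\<bar> \<le> indicator {0..<t} s * (heatG_majorant (t - s) * \<beta> s)"
proof (cases "s \<in> {0..<t}")
  case True
  have "\<bar>heat_slice t x g s\<bar> \<le> heatG_majorant (t - s) * \<beta> s"
    unfolding heat_slice_def
    by (rule abs_integral_le_of_nn_integral_le[OF nn_integral_abs_heat_integrand_le[OF True]])
       (use True bound heatG_majorant_nonneg[of "t - s"] \<beta>[of s] in \<open>auto simp: rect_def\<close>)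
  thus ?thesis using True by simp
qed (simp add: heat_slice_def)

lemma heat_slice_diff:
  fixes g1 g2 :: "real \<times> real \<Rightarrow> real"
  assumes g1: "g1 \<in> borel_measurable borel" and g2: "g2 \<in> borel_measurable borel"
    and bound1: "\<And>p. p \<in> rect t \<Longrightarrow> \<bar>g1 p\<bar> \<le> B1"
    and bound2: "\<And>p. p \<in> rect t \<Longrightarrow> \<bar>g2 p\<bar> \<le> B2"
  shows "heat_slice t x g1 s - heat_slice t x g2 s = heat_slice t x (\<lambda>p. g1 p - g2 p) s"
proof (cases "s \<in> {0..<t}")
  case True
  have "\<bar>g1 (s, y)\<bar> \<le> B1" "\<bar>g2 (s, y)\<bar> \<le> B2" if "y \<in> {0..1}" for y
    using True that bound1 bound2 by (auto simp: rect_def)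
  note integrable = integrable_heat_integrand[of g1 s t B1, OF g1 True]
    integrable_heat_integrand[of g2 s t B2, OF g2 True]
  show ?thesis unfolding heat_slice_def
    by (subst Bochner_Integration.integral_diff[symmetric, OF integrable])
       (use \<open>\<And>y. y \<in> {0..1} \<Longrightarrow> \<bar>g1 (s, y)\<bar> \<le> B1\<close> \<open>\<And>y. y \<in> {0..1} \<Longrightarrow> \<bar>g2 (s, y)\<bar> \<le> B2\<close>
        in \<open>auto simp: algebra_simps\<close>)
qed (simp add: heat_slice_def)

lemma integrable_heat_slice:
  fixes g :: "real \<times> real \<Rightarrow> real"
  assumes g: "g \<in> borel_measurable borel" and bound: "\<And>p. p \<in> rect t \<Longrightarrow> \<bar>g p\<bar> \<le> B"
    and B: "0 \<le> B" and t: "0 \<le> t"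
  shows "integrable lborel (heat_slice t x g)"
proof (rule integrableI_bounded[OF borel_measurable_heat_slice[OF g]])
  have "(\<integral>\<^sup>+s. ennreal (norm (heat_slice t x g s)) \<partial>lborel)
       \<le> (\<integral>\<^sup>+s. ennreal (indicator {0..<t} s * (heatG_majorant (t - s) * (B * exp (0 * s)))) \<partial>lborel)"
    by (intro nn_integral_mono ennreal_leI) (use abs_heat_slice_le[OF bound] B in auto)
  also have "\<dots> \<le> ennreal (B * exp (0 * t) * heat_laplace_bound 0)"
    by (rule nn_integral_majorant_mult_exp_le[OF t _ B]) simp
  finally show "(\<integral>\<^sup>+s. ennreal (norm (heat_slice t x g s)) \<partial>lborel) < \<infinity>"
    by (simp add: le_less_trans)
qed

lemma closed_rect: "closed (rect t)"
  unfolding rect_def by (intro closed_Times closed_atLeastAtMost)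

lemma compact_rect: "compact (rect t)"
  unfolding rect_def by (intro compact_Times compact_Icc)

lemma rect_mono: "t \<le> T \<Longrightarrow> rect t \<subseteq> rect T"
  unfolding rect_def by auto

lemma continuous_on_rect_bounded:
  fixes h :: "real \<times> real \<Rightarrow> real"
  assumes "continuous_on (rect t) h"
  obtains B where "B > 0" "\<And>p. p \<in> rect t \<Longrightarrow> \<bar>h p\<bar> \<le> B"
proof -
  have "bounded (h ` rect t)"
    by (rule compact_imp_bounded[OF compact_continuous_image[OF assms compact_rect]])
  thus ?thesis using that by (auto simp: bounded_pos)
qed

lemma borel_measurable_indicator_rect_mult:
  fixes h :: "real \<times> real \<Rightarrow> real"
  assumes "continuous_on (rect t) h"
  shows "(\<lambda>p. indicator (rect t) p * h p) \<in> borel_measurable borel"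
  using borel_measurable_continuous_on_indicator[OF borel_closed[OF closed_rect] assms] by simp

lemma heat_conv_eq_integral_heat_slice:
  fixes h :: "real \<times> real \<Rightarrow> real"
  assumes "continuous_on (rect t) h"
  shows "heat_conv h (t,x) = integral\<^sup>L lborel (heat_slice t x (\<lambda>p. indicator (rect t) p * h p))"
proof -
  define g where "g = (\<lambda>p. indicator (rect t) p * h p)"
  have [measurable]: "heat_slice t x g \<in> borel_measurable lborel"
    unfolding g_def by (intro borel_measurable_heat_slice borel_measurable_indicator_rect_mult assms)
  define F where "F s = indicator {0..t} s * (\<integral>y. indicator {0..1} y * (heatG (t - s) x y * h (s,y)) \<partial>lborel)"
    for s
  have "heat_conv h (t,x) = integral\<^sup>L lborel F"
    unfolding heat_conv_def set_lebesgue_integral_def F_def by simp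
  have F_eq: "F s = heat_slice t x g s" if "s \<noteq> t" for s
  proof (cases "s \<in> {0..<t}")
    case True
    thus ?thesis unfolding F_def heat_slice_def
      by (auto intro!: Bochner_Integration.integral_cong simp: g_def rect_def indicator_def)
  next
    case False
    with that have "s \<notin> {0..t}" by auto
    thus ?thesis using False by (simp add: F_def heat_slice_def)
  qed
  have "F = (\<lambda>s. if s = t then F t else heat_slice t x g s)" using F_eq by auto
  moreover have "(\<lambda>s. if s = t then F t else heat_slice t x g s) \<in> borel_measurable lborel"
    by measurable
  ultimately have "F \<in> borel_measurable lborel" by simp
  hence "integral\<^sup>L lborel F = integral\<^sup>L lborel (heat_slice t x g)"
    by (rule integral_cong_AE) (use AE_lborel_singleton[of t] F_eq in \<open>auto elim!: AE_mp\<close>)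
  thus ?thesis using \<open>heat_conv h (t,x) = integral\<^sup>L lborel F\<close> g_def by simp
qed

lemma abs_heat_conv_diff_le:
  fixes h1 h2 :: "real \<times> real \<Rightarrow> real"
  assumes t: "0 \<le> t" and l: "0 \<le> l" and B: "0 \<le> B"
    and h1: "continuous_on (rect t) h1" and h2: "continuous_on (rect t) h2"
    and bound: "\<And>s y. (s,y) \<in> rect t \<Longrightarrow> \<bar>h1 (s,y) - h2 (s,y)\<bar> \<le> B * exp (l * s)"
  shows "\<bar>heat_conv h1 (t,x) - heat_conv h2 (t,x)\<bar> \<le> B * exp (l * t) * heat_laplace_bound l"
proof -
  define g1 where "g1 = (\<lambda>p. indicator (rect t) p * h1 p)"
  define g2 where "g2 = (\<lambda>p. indicator (rect t) p * h2 p)"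
  have g1: "g1 \<in> borel_measurable borel" and g2: "g2 \<in> borel_measurable borel"
    unfolding g1_def g2_def by (intro borel_measurable_indicator_rect_mult h1 h2)+
  obtain B1 where "B1 > 0" "\<And>p. p \<in> rect t \<Longrightarrow> \<bar>h1 p\<bar> \<le> B1"
    using continuous_on_rect_bounded[OF h1] by blast
  hence B1: "0 \<le> B1" "\<And>p. p \<in> rect t \<Longrightarrow> \<bar>g1 p\<bar> \<le> B1" by (auto simp: g1_def)
  obtain B2 where "B2 > 0" "\<And>p. p \<in> rect t \<Longrightarrow> \<bar>h2 p\<bar> \<le> B2"
    using continuous_on_rect_bounded[OF h2] by blast
  hence B2: "0 \<le> B2" "\<And>p. p \<in> rect t \<Longrightarrow> \<bar>g2 p\<bar> \<le> B2" by (auto simp: g2_def)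
  have "heat_conv h1 (t,x) - heat_conv h2 (t,x)
        = integral\<^sup>L lborel (\<lambda>s. heat_slice t x g1 s - heat_slice t x g2 s)"
    unfolding heat_conv_eq_integral_heat_slice[OF h1] heat_conv_eq_integral_heat_slice[OF h2]
      g1_def[symmetric] g2_def[symmetric]
    by (intro Bochner_Integration.integral_diff[symmetric] integrable_heat_slice[OF g1 B1(2) B1(1) t]
        integrable_heat_slice[OF g2 B2(2) B2(1) t])
  also have "\<dots> = integral\<^sup>L lborel (heat_slice t x (\<lambda>p. g1 p - g2 p))"
    by (intro Bochner_Integration.integral_cong refl heat_slice_diff[OF g1 g2 B1(2) B2(2)])
  finally have eq: "heat_conv h1 (t,x) - heat_conv h2 (t,x) = \<dots>" .
  have "\<bar>g1 (s,y) - g2 (s,y)\<bar> \<le> B * exp (l * s)" if "(s,y) \<in> rect t" for s y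
    using bound[OF that] that by (simp add: g1_def g2_def)
  hence "(\<integral>\<^sup>+s. ennreal \<bar>heat_slice t x (\<lambda>p. g1 p - g2 p) s\<bar> \<partial>lborel)
      \<le> (\<integral>\<^sup>+s. ennreal (indicator {0..<t} s * (heatG_majorant (t - s) * (B * exp (l * s)))) \<partial>lborel)"
    by (intro nn_integral_mono ennreal_leI abs_heat_slice_le) (use B in auto)
  also have "\<dots> \<le> ennreal (B * exp (l * t) * heat_laplace_bound l)"
    by (rule nn_integral_majorant_mult_exp_le[OF t l B])
  finally show ?thesis unfolding eq
    by (rule abs_integral_le_of_nn_integral_le) (use B heat_laplace_bound_nonneg[OF l] in auto)
qed

section \<open>Stability of the mild equation\<close>

definition mild_solution :: "real \<Rightarrow> (real \<Rightarrow> real) \<Rightarrow> (real \<Rightarrow> real) \<Rightarrow> (real \<times> real \<Rightarrow> real)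
                               \<Rightarrow> (real \<times> real \<Rightarrow> real) \<Rightarrow> bool" where
  "mild_solution T u0 b f v \<longleftrightarrow> continuous_on (rect T) v \<and>
     (\<forall>t x. (t, x) \<in> rect T \<longrightarrow>
        v (t, x) = heat_sg u0 t x + heat_conv (\<lambda>p. b (v p)) (t, x) + f (t, x))"

lemma mild_solution_cong_forcing:
  "(\<And>p. p \<in> rect T \<Longrightarrow> f p = g p) \<Longrightarrow> mild_solution T u0 b f v \<Longrightarrow> mild_solution T u0 b g v"
  unfolding mild_solution_def by auto

lemma continuous_on_rect_comp_lipschitz:
  assumes b: "L-lipschitz_on UNIV b" and v: "continuous_on (rect T) v" and "t \<le> T"
  shows "continuous_on (rect t) (\<lambda>p. b (v p))"
proof -
  have "continuous_on (rect T) (\<lambda>p. b (v p))"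
    using continuous_on_compose2[OF lipschitz_on_continuous_on[OF b] v] by auto
  thus ?thesis using continuous_on_subset rect_mono[OF \<open>t \<le> T\<close>] by blast
qed

lemma abs_heat_conv_lipschitz_diff_le:
  assumes b: "L-lipschitz_on UNIV b"
    and v: "continuous_on (rect T) v" and w: "continuous_on (rect T) w"
    and p: "(t,x) \<in> rect T" and l: "0 \<le> l" and D: "0 \<le> D"
    and bound: "\<And>s y. (s,y) \<in> rect T \<Longrightarrow> \<bar>v (s,y) - w (s,y)\<bar> \<le> D * exp (l * s)"
  shows "\<bar>heat_conv (\<lambda>p. b (v p)) (t,x) - heat_conv (\<lambda>p. b (w p)) (t,x)\<bar>
         \<le> L * D * exp (l * t) * heat_laplace_bound l"
proof -
  have t: "0 \<le> t" "t \<le> T" using p by (auto simp: rect_def)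
  have L: "0 \<le> L" by (rule lipschitz_on_nonneg[OF b])
  show ?thesis
  proof (rule abs_heat_conv_diff_le[OF t(1) l _ continuous_on_rect_comp_lipschitz[OF b v t(2)]
        continuous_on_rect_comp_lipschitz[OF b w t(2)]])
    show "0 \<le> L * D" using L D by simp
    fix s y assume "(s,y) \<in> rect t"
    hence sy: "(s,y) \<in> rect T" using rect_mono[OF t(2)] by auto
    have "\<bar>b (v (s,y)) - b (w (s,y))\<bar> \<le> L * \<bar>v (s,y) - w (s,y)\<bar>"
      using lipschitz_onD[OF b, of "v (s,y)" "w (s,y)"] by (simp add: dist_real_def)
    also have "\<dots> \<le> L * (D * exp (l * s))" by (intro mult_left_mono bound[OF sy] L)
    finally show "\<bar>b (v (s,y)) - b (w (s,y))\<bar> \<le> L * D * exp (l * s)" by (simp add: mult_ac)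
  qed
qed

text \<open>Gronwall's lemma in the guise of a weighted sup norm \<open>sup |v| e\<^sup>-\<^sup>\<lambda>\<^sup>t\<close>: by
  \<open>heat_laplace_bound (m\<^sup>2) \<le> 4 / m\<close>, the rate \<open>\<lambda> = (8L + 1)\<^sup>2\<close> makes the nonlinear term a
  contraction of ratio 1/2 for that norm.\<close>

definition stability_rate :: "real \<Rightarrow> real" where
  "stability_rate L = (8 * L + 1)\<^sup>2"

definition stability_const :: "real \<Rightarrow> real \<Rightarrow> real" where
  "stability_const L T = 2 * exp (stability_rate L * T)"

lemma stability_const_pos: "0 < stability_const L T"
  by (simp add: stability_const_def)

lemma lipschitz_heat_laplace_bound_le:
  assumes L: "0 \<le> L"
  shows "L * heat_laplace_bound (stability_rate L) \<le> 1 / 2"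
proof -
  have m: "0 < 8 * L + 1" using L by simp
  have "L * heat_laplace_bound (stability_rate L) \<le> L * (4 / (8 * L + 1))"
    unfolding stability_rate_def by (intro mult_left_mono heat_laplace_bound_square_le m L)
  also have "\<dots> \<le> 1 / 2" using m L by (simp add: field_simps)
  finally show ?thesis .
qed

lemma mild_solution_weighted_diff_le:
  assumes b: "L-lipschitz_on UNIV b"
    and v: "mild_solution T u0 b f v" and w: "mild_solution T u0 b g w"
    and fg: "\<And>p. p \<in> rect T \<Longrightarrow> \<bar>f p - g p\<bar> \<le> \<delta>"
    and D: "0 \<le> D"
    and bound: "\<And>s y. (s,y) \<in> rect T \<Longrightarrow> \<bar>v (s,y) - w (s,y)\<bar> \<le> D * exp (stability_rate L * s)"
    and p: "(t,x) \<in> rect T"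
  shows "\<bar>v (t,x) - w (t,x)\<bar> * exp (- stability_rate L * t) \<le> \<delta> + D / 2"
proof -
  let ?l = "stability_rate L"
  have l: "0 \<le> ?l" by (simp add: stability_rate_def)
  have t: "0 \<le> t" and \<delta>: "0 \<le> \<delta>" using p fg[OF p] by (auto simp: rect_def)
  have "v (t,x) - w (t,x) = (f (t,x) - g (t,x))
          + (heat_conv (\<lambda>p. b (v p)) (t,x) - heat_conv (\<lambda>p. b (w p)) (t,x))"
    using v w p by (auto simp: mild_solution_def)
  hence "\<bar>v (t,x) - w (t,x)\<bar> \<le> \<delta> + L * D * exp (?l * t) * heat_laplace_bound ?l"
    using fg[OF p] abs_heat_conv_lipschitz_diff_le[OF b _ _ p l D bound] v w
    by (smt (verit) mild_solution_def)
  hence "\<bar>v (t,x) - w (t,x)\<bar> * exp (- ?l * t)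
         \<le> (\<delta> + L * D * exp (?l * t) * heat_laplace_bound ?l) * exp (- ?l * t)"
    by (rule mult_right_mono) simp
  also have "\<dots> = \<delta> * exp (- ?l * t) + (L * heat_laplace_bound ?l) * D"
    by (simp add: algebra_simps exp_minus field_simps)
  also have "\<dots> \<le> \<delta> * 1 + (1 / 2) * D"
    using \<delta> l t lipschitz_heat_laplace_bound_le[OF lipschitz_on_nonneg[OF b]] D
    by (intro add_mono mult_left_mono mult_right_mono) auto
  finally show ?thesis by simp
qed

lemma mild_solution_stability:
  assumes b: "L-lipschitz_on UNIV b" and T: "0 \<le> T"
    and v: "mild_solution T u0 b f v" and w: "mild_solution T u0 b g w"
    and fg: "\<And>p. p \<in> rect T \<Longrightarrow> \<bar>f p - g p\<bar> \<le> \<delta>"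
    and p: "p \<in> rect T"
  shows "\<bar>v p - w p\<bar> \<le> stability_const L T * \<delta>"
proof -
  let ?l = "stability_rate L"
  define q where "q p = \<bar>v p - w p\<bar> * exp (- ?l * fst p)" for p
  have "continuous_on (rect T) q"
    using v w unfolding q_def mild_solution_def by (intro continuous_intros) auto
  hence bdd: "bdd_above (q ` rect T)"
    by (intro bounded_imp_bdd_above compact_imp_bounded compact_continuous_image compact_rect)
  define D where "D = Sup (q ` rect T)"
  have q_le: "q p' \<le> D" if "p' \<in> rect T" for p'
    unfolding D_def by (rule cSup_upper[OF _ bdd]) (use that in auto)
  have D: "0 \<le> D" using q_le[of "(0,0)"] T by (auto simp: q_def rect_def)
  have bound: "\<bar>v (s,y) - w (s,y)\<bar> \<le> D * exp (?l * s)" if "(s,y) \<in> rect T" for s y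
  proof -
    have "\<bar>v (s,y) - w (s,y)\<bar> = q (s,y) * exp (?l * s)"
      by (simp add: q_def mult.assoc exp_minus field_simps)
    also have "\<dots> \<le> D * exp (?l * s)" by (intro mult_right_mono q_le that) simp
    finally show ?thesis .
  qed
  have "Sup (q ` rect T) \<le> \<delta> + D / 2"
    by (rule cSup_least)
       (use T mild_solution_weighted_diff_le[OF b v w fg D bound] in \<open>auto simp: q_def rect_def\<close>)
  hence "D \<le> \<delta> + D / 2" unfolding D_def .
  obtain t x where tx: "p = (t,x)" by (cases p)
  have "\<bar>v p - w p\<bar> \<le> D * exp (?l * t)" using bound p tx by simp
  also have "\<dots> \<le> 2 * \<delta> * exp (?l * T)"
    using \<open>D \<le> \<delta> + D / 2\<close> D p tx
    by (intro mult_mono) (auto simp: rect_def stability_rate_def mult_left_mono)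
  also have "\<dots> = stability_const L T * \<delta>" by (simp add: stability_const_def)
  finally show ?thesis .
qed

lemma mild_solution_unique:
  assumes "L-lipschitz_on UNIV b" "0 \<le> T"
    and "mild_solution T u0 b f v" "mild_solution T u0 b g w"
    and "\<And>p. p \<in> rect T \<Longrightarrow> f p = g p" "p \<in> rect T"
  shows "v p = w p"
  using mild_solution_stability[OF assms(1-4), of 0 p] assms(5,6) by simp

section \<open>The solution map on continuous forcings\<close>

text \<open>Continuous functions on \<open>rect T\<close> are embedded isometrically into the Banach space of
  bounded continuous functions on the plane by extending them constantly along the normals.\<close>

definition clamp_rect :: "real \<Rightarrow> real \<times> real \<Rightarrow> real \<times> real" where
  "clamp_rect T p = (max 0 (min T (fst p)), max 0 (min 1 (snd p)))"

definition rect_bcontfun :: "real \<Rightarrow> (real \<times> real \<Rightarrow> real) \<Rightarrow> (real \<times> real) \<Rightarrow>\<^sub>C real" where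
  "rect_bcontfun T f = Bcontfun (\<lambda>p. f (clamp_rect T p))"

lemma clamp_rect_in_rect: "0 \<le> T \<Longrightarrow> clamp_rect T p \<in> rect T"
  by (auto simp: clamp_rect_def rect_def)

lemma clamp_rect_id: "p \<in> rect T \<Longrightarrow> clamp_rect T p = p"
  by (cases p) (auto simp: clamp_rect_def rect_def)

lemma continuous_on_clamp_rect: "continuous_on UNIV (clamp_rect T)"
  unfolding clamp_rect_def by (intro continuous_intros)

lemma apply_rect_bcontfun:
  assumes T: "0 \<le> T" and f: "continuous_on (rect T) f"
  shows "apply_bcontfun (rect_bcontfun T f) = (\<lambda>p. f (clamp_rect T p))"
proof -
  have "continuous_on UNIV (\<lambda>p. f (clamp_rect T p))"
    by (rule continuous_on_compose2[OF f continuous_on_clamp_rect]) (use clamp_rect_in_rect[OF T] in auto)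
  moreover have "bounded (range (\<lambda>p. f (clamp_rect T p)))"
  proof (rule bounded_subset)
    show "bounded (f ` rect T)"
      by (rule compact_imp_bounded[OF compact_continuous_image[OF f compact_rect]])
  qed (use clamp_rect_in_rect[OF T] in auto)
  ultimately show ?thesis
    unfolding rect_bcontfun_def by (simp add: Bcontfun_inverse bcontfun_def)
qed

lemma apply_rect_bcontfun_rect:
  "0 \<le> T \<Longrightarrow> continuous_on (rect T) f \<Longrightarrow> p \<in> rect T \<Longrightarrow> apply_bcontfun (rect_bcontfun T f) p = f p"
  by (simp add: apply_rect_bcontfun clamp_rect_id)

lemma dist_rect_bcontfun_le:
  assumes T: "0 \<le> T" and f: "continuous_on (rect T) f" and g: "continuous_on (rect T) g"
    and bound: "\<And>p. p \<in> rect T \<Longrightarrow> \<bar>f p - g p\<bar> \<le> d"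
  shows "dist (rect_bcontfun T f) (rect_bcontfun T g) \<le> d"
  by (rule dist_bound)
     (use bound clamp_rect_in_rect[OF T] in \<open>auto simp: apply_rect_bcontfun[OF T f]
        apply_rect_bcontfun[OF T g] dist_real_def\<close>)

lemma abs_apply_bcontfun_diff_le_dist:
  fixes f g :: "'a::topological_space \<Rightarrow>\<^sub>C real"
  shows "\<bar>apply_bcontfun f p - apply_bcontfun g p\<bar> \<le> dist f g"
  using dist_bounded[of f p g] by (simp add: dist_real_def)

lemma tendsto_apply_bcontfun:
  fixes f :: "nat \<Rightarrow> 'a::topological_space \<Rightarrow>\<^sub>C real"
  assumes "f \<longlonglongrightarrow> g"
  shows "(\<lambda>k. apply_bcontfun (f k) p) \<longlonglongrightarrow> apply_bcontfun g p"
proof -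
  have "(\<lambda>k. apply_bcontfun (f k) p - apply_bcontfun g p) \<longlonglongrightarrow> 0"
    by (rule Lim_null_comparison[OF always_eventually tendsto_dist_iff[THEN iffD1, OF assms]])
       (simp add: abs_apply_bcontfun_diff_le_dist)
  thus ?thesis by (rule LIM_zero_cancel)
qed

lemma Cauchy_dist_le_mult:
  fixes \<phi> :: "nat \<Rightarrow> 'a::metric_space" and \<psi> :: "nat \<Rightarrow> 'b::metric_space"
  assumes "Cauchy \<phi>" and dist_le: "\<And>j k. dist (\<psi> j) (\<psi> k) \<le> K * dist (\<phi> j) (\<phi> k)"
  shows "Cauchy \<psi>"
proof (rule metric_CauchyI)
  fix e :: real assume e: "e > 0"
  define K' where "K' = max K 1"
  have K': "0 < K'" by (simp add: K'_def)
  obtain M where M: "\<forall>m\<ge>M. \<forall>n\<ge>M. dist (\<phi> m) (\<phi> n) < e / K'"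
    using metric_CauchyD[OF assms(1), of "e / K'"] e K' by auto
  have "dist (\<psi> m) (\<psi> n) < e" if "M \<le> m" "M \<le> n" for m n
  proof -
    have "dist (\<psi> m) (\<psi> n) \<le> K' * dist (\<phi> m) (\<phi> n)"
      using dist_le[of m n] mult_right_mono[OF max.cobounded1[of K 1] zero_le_dist[of "\<phi> m" "\<phi> n"]]
      unfolding K'_def by linarith
    also have "\<dots> < K' * (e / K')" using M that K' by (intro mult_strict_left_mono) auto
    finally show ?thesis using K' by simp
  qed
  thus "\<exists>M. \<forall>m\<ge>M. \<forall>n\<ge>M. dist (\<psi> m) (\<psi> n) < e" by blast
qed

lemma tendsto_heat_conv_comp:
  fixes v :: "nat \<Rightarrow> real \<times> real \<Rightarrow> real" and b :: "real \<Rightarrow> real"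
  assumes b: "L-lipschitz_on UNIV b" and p: "(t,x) \<in> rect T"
    and v: "\<And>n. continuous_on (rect T) (v n)" and w: "continuous_on (rect T) w"
    and d: "d \<longlonglongrightarrow> 0" and bound: "\<And>n p. p \<in> rect T \<Longrightarrow> \<bar>v n p - w p\<bar> \<le> d n"
  shows "(\<lambda>n. heat_conv (\<lambda>p. b (v n p)) (t,x)) \<longlonglongrightarrow> heat_conv (\<lambda>p. b (w p)) (t,x)"
proof -
  have d_nonneg: "0 \<le> d n" for n using bound[OF p, of n] by (rule order_trans[OF abs_ge_zero])
  have le: "norm (heat_conv (\<lambda>p. b (v n p)) (t,x) - heat_conv (\<lambda>p. b (w p)) (t,x))
        \<le> L * d n * exp (0 * t) * heat_laplace_bound 0" for n
    using abs_heat_conv_lipschitz_diff_le[OF b v w p _ d_nonneg, of 0] bound by simp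
  have lim: "(\<lambda>n. L * d n * exp (0 * t) * heat_laplace_bound 0) \<longlonglongrightarrow> 0"
    using tendsto_mult_right_zero[OF d, of L] by (simp add: tendsto_mult_left_zero)
  have "(\<lambda>n. heat_conv (\<lambda>p. b (v n p)) (t,x) - heat_conv (\<lambda>p. b (w p)) (t,x)) \<longlonglongrightarrow> 0"
    by (rule Lim_null_comparison[OF always_eventually lim]) (use le in blast)
  thus ?thesis by (rule LIM_zero_cancel)
qed

lemma mild_solution_limit:
  assumes b: "L-lipschitz_on UNIV b" and T: "0 \<le> T"
    and v: "\<And>n. mild_solution T u0 b (apply_bcontfun (\<phi> n)) (v n)"
    and \<phi>: "\<phi> \<longlonglongrightarrow> \<phi>0" and \<psi>: "(\<lambda>n. rect_bcontfun T (v n)) \<longlonglongrightarrow> \<psi>0"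
  shows "mild_solution T u0 b (apply_bcontfun \<phi>0) (apply_bcontfun \<psi>0)"
  unfolding mild_solution_def
proof (intro conjI allI impI continuous_on_apply_bcontfun)
  fix t x assume tx: "(t,x) \<in> rect T"
  have cont: "continuous_on (rect T) (v n)" for n using v by (simp add: mild_solution_def)
  have v_eq: "apply_bcontfun (rect_bcontfun T (v n)) p = v n p" if "p \<in> rect T" for n p
    by (rule apply_rect_bcontfun_rect[OF T cont that])
  have "(\<lambda>n. v n (t,x)) \<longlonglongrightarrow> apply_bcontfun \<psi>0 (t,x)"
    using tendsto_apply_bcontfun[OF \<psi>, of "(t,x)"] v_eq[OF tx] by simp
  moreover have "(\<lambda>n. v n (t,x)) \<longlonglongrightarrow>
      heat_sg u0 t x + heat_conv (\<lambda>p. b (apply_bcontfun \<psi>0 p)) (t,x) + apply_bcontfun \<phi>0 (t,x)"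
  proof -
    have "v n (t,x) = heat_sg u0 t x + heat_conv (\<lambda>p. b (v n p)) (t,x) + apply_bcontfun (\<phi> n) (t,x)" for n
      using v[of n] tx by (simp add: mild_solution_def)
    moreover have "(\<lambda>n. heat_conv (\<lambda>p. b (v n p)) (t,x))
                   \<longlonglongrightarrow> heat_conv (\<lambda>p. b (apply_bcontfun \<psi>0 p)) (t,x)"
      by (rule tendsto_heat_conv_comp[OF b tx cont continuous_on_apply_bcontfun
            tendsto_dist_iff[THEN iffD1, OF \<psi>]])
         (use abs_apply_bcontfun_diff_le_dist v_eq in metis)
    ultimately show ?thesis
      by (simp only:) (intro tendsto_add tendsto_const tendsto_apply_bcontfun[OF \<phi>])
  qed
  ultimately show "apply_bcontfun \<psi>0 (t,x)
      = heat_sg u0 t x + heat_conv (\<lambda>p. b (apply_bcontfun \<psi>0 p)) (t,x) + apply_bcontfun \<phi>0 (t,x)"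
    by (rule LIMSEQ_unique)
qed

lemma closed_solvable_forcings:
  assumes b: "L-lipschitz_on UNIV b" and T: "0 \<le> T"
  shows "closed {\<phi> :: (real \<times> real) \<Rightarrow>\<^sub>C real. \<exists>v. mild_solution T u0 b (apply_bcontfun \<phi>) v}"
  unfolding closed_sequential_limits
proof safe
  fix \<phi> :: "nat \<Rightarrow> (real \<times> real) \<Rightarrow>\<^sub>C real" and \<phi>0
  assume "\<forall>n. \<phi> n \<in> {\<phi>. \<exists>v. mild_solution T u0 b (apply_bcontfun \<phi>) v}" and \<phi>: "\<phi> \<longlonglongrightarrow> \<phi>0"
  then obtain v where v: "\<And>n. mild_solution T u0 b (apply_bcontfun (\<phi> n)) (v n)"
    unfolding mem_Collect_eq choice_iff by blast
  have cont: "continuous_on (rect T) (v n)" for n using v by (simp add: mild_solution_def)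
  have "Cauchy (\<lambda>n. rect_bcontfun T (v n))"
  proof (rule Cauchy_dist_le_mult[OF LIMSEQ_imp_Cauchy[OF \<phi>]])
    show "dist (rect_bcontfun T (v j)) (rect_bcontfun T (v k)) \<le> stability_const L T * dist (\<phi> j) (\<phi> k)"
      for j k
    proof (rule dist_rect_bcontfun_le[OF T cont cont])
      show "\<bar>v j p - v k p\<bar> \<le> stability_const L T * dist (\<phi> j) (\<phi> k)" if "p \<in> rect T" for p
        by (rule mild_solution_stability[OF b T v v abs_apply_bcontfun_diff_le_dist that])
    qed
  qed
  then obtain \<psi>0 where "(\<lambda>n. rect_bcontfun T (v n)) \<longlonglongrightarrow> \<psi>0"
    using Cauchy_convergent_iff convergent_def by blast
  from mild_solution_limit[OF b T v \<phi> this]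
  show "\<exists>v. mild_solution T u0 b (apply_bcontfun \<phi>0) v" by blast
qed

section \<open>Transfer of convergence in law through the solution map\<close>

lemma bdd_cont_functional_eq_on_rect:
  assumes F: "bdd_cont_functional T F"
    and f: "continuous_on (rect T) f" and g: "continuous_on (rect T) g"
    and eq: "\<And>p. p \<in> rect T \<Longrightarrow> f p = g p"
  shows "F f = F g"
proof (rule ccontr)
  assume "F f \<noteq> F g"
  hence "\<bar>F f - F g\<bar> > 0" by simp
  then obtain \<delta> where "\<delta> > 0" and \<delta>: "\<And>h. continuous_on (rect T) h \<Longrightarrow> (\<forall>p\<in>rect T. \<bar>f p - h p\<bar> < \<delta>)
                        \<Longrightarrow> \<bar>F f - F h\<bar> < \<bar>F f - F g\<bar>"
    using F f unfolding bdd_cont_functional_def by meson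
  have "\<bar>F f - F g\<bar> < \<bar>F f - F g\<bar>" by (rule \<delta>[OF g]) (use eq \<open>\<delta> > 0\<close> in auto)
  thus False by simp
qed

lemma bdd_cont_functional_cong:
  assumes "bdd_cont_functional T F" and "\<And>f. continuous_on (rect T) f \<Longrightarrow> G f = F f"
  shows "bdd_cont_functional T G"
  using assms unfolding bdd_cont_functional_def by simp

lemma bdd_cont_functional_comp_rect_bcontfun:
  assumes T: "0 \<le> T" and \<Phi>: "continuous_on UNIV \<Phi>" and bounded: "\<And>\<phi>. \<bar>\<Phi> \<phi>\<bar> \<le> C"
  shows "bdd_cont_functional T (\<lambda>f. \<Phi> (rect_bcontfun T f))"
  unfolding bdd_cont_functional_def
proof (intro conjI allI impI)
  show "\<exists>C. \<forall>f. continuous_on (rect T) f \<longrightarrow> \<bar>\<Phi> (rect_bcontfun T f)\<bar> \<le> C"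
    using bounded by blast
  fix f :: "real \<times> real \<Rightarrow> real" and \<epsilon> :: real
  assume f: "continuous_on (rect T) f" and \<epsilon>: "\<epsilon> > 0"
  obtain d where d: "d > 0"
    and close: "\<And>\<phi>. dist \<phi> (rect_bcontfun T f) < d \<Longrightarrow> dist (\<Phi> \<phi>) (\<Phi> (rect_bcontfun T f)) < \<epsilon>"
    using \<Phi>[unfolded continuous_on_iff] \<epsilon> by blast
  show "\<exists>\<delta>>0. \<forall>g. continuous_on (rect T) g \<and> (\<forall>p\<in>rect T. \<bar>f p - g p\<bar> < \<delta>)
          \<longrightarrow> \<bar>\<Phi> (rect_bcontfun T f) - \<Phi> (rect_bcontfun T g)\<bar> < \<epsilon>"
  proof (intro exI conjI allI impI)
    show "0 < d / 2" using d by simp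
    fix g assume g: "continuous_on (rect T) g \<and> (\<forall>p\<in>rect T. \<bar>f p - g p\<bar> < d / 2)"
    have "dist (rect_bcontfun T g) (rect_bcontfun T f) \<le> d / 2"
      by (rule dist_rect_bcontfun_le[OF T]) (use g f in \<open>auto simp: abs_minus_commute less_imp_le\<close>)
    hence "dist (\<Phi> (rect_bcontfun T g)) (\<Phi> (rect_bcontfun T f)) < \<epsilon>" using close d by simp
    thus "\<bar>\<Phi> (rect_bcontfun T f) - \<Phi> (rect_bcontfun T g)\<bar> < \<epsilon>"
      by (simp add: dist_real_def abs_minus_commute)
  qed
qed

lemma mild_solution_some:
  "mild_solution T u0 b f u \<Longrightarrow> mild_solution T u0 b f (SOME v. mild_solution T u0 b f v)"
  by (rule someI[where P = "mild_solution T u0 b f"])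

lemma functional_some_mild_solution:
  assumes b: "L-lipschitz_on UNIV b" and T: "0 \<le> T" and F: "bdd_cont_functional T F"
    and u: "mild_solution T u0 b f u"
  shows "F (SOME v. mild_solution T u0 b f v) = F u"
proof -
  note v = mild_solution_some[OF u]
  show ?thesis
    by (rule bdd_cont_functional_eq_on_rect[OF F])
       (use v u mild_solution_unique[OF b T v u] in \<open>auto simp: mild_solution_def\<close>)
qed

lemma continuous_on_solution_functional:
  assumes b: "L-lipschitz_on UNIV b" and T: "0 \<le> T" and F: "bdd_cont_functional T F"
  shows "continuous_on {\<phi>. \<exists>v. mild_solution T u0 b (apply_bcontfun \<phi>) v}
           (\<lambda>\<phi>. F (SOME v. mild_solution T u0 b (apply_bcontfun \<phi>) v))"
  unfolding continuous_on_iff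
proof (intro ballI allI impI)
  let ?u = "\<lambda>\<phi>. SOME v. mild_solution T u0 b (apply_bcontfun \<phi>) v"
  have u: "mild_solution T u0 b (apply_bcontfun \<phi>) (?u \<phi>)"
    if "\<phi> \<in> {\<phi>. \<exists>v. mild_solution T u0 b (apply_bcontfun \<phi>) v}" for \<phi>
    using that mild_solution_some by blast
  fix \<phi> e assume \<phi>: "\<phi> \<in> {\<phi>. \<exists>v. mild_solution T u0 b (apply_bcontfun \<phi>) v}" and e: "(0::real) < e"
  have "continuous_on (rect T) (?u \<phi>)" using u[OF \<phi>] by (simp add: mild_solution_def)
  then obtain \<delta> where "\<delta> > 0" and \<delta>: "\<And>g. continuous_on (rect T) g \<Longrightarrow> (\<forall>p\<in>rect T. \<bar>?u \<phi> p - g p\<bar> < \<delta>)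
                          \<Longrightarrow> \<bar>F (?u \<phi>) - F g\<bar> < e"
    using F e unfolding bdd_cont_functional_def by blast
  show "\<exists>d>0. \<forall>\<phi>'\<in>{\<phi>. \<exists>v. mild_solution T u0 b (apply_bcontfun \<phi>) v}.
          dist \<phi>' \<phi> < d \<longrightarrow> dist (F (?u \<phi>')) (F (?u \<phi>)) < e"
  proof (intro exI conjI ballI impI)
    show "0 < \<delta> / stability_const L T" using \<open>\<delta> > 0\<close> stability_const_pos by simp
    fix \<phi>' assume \<phi>': "\<phi>' \<in> {\<phi>. \<exists>v. mild_solution T u0 b (apply_bcontfun \<phi>) v}"
      and dist: "dist \<phi>' \<phi> < \<delta> / stability_const L T"
    have "\<bar>?u \<phi> p - ?u \<phi>' p\<bar> < \<delta>" if "p \<in> rect T" for p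
    proof -
      have "\<bar>?u \<phi> p - ?u \<phi>' p\<bar> \<le> stability_const L T * dist \<phi> \<phi>'"
        by (rule mild_solution_stability[OF b T u[OF \<phi>] u[OF \<phi>'] abs_apply_bcontfun_diff_le_dist that])
      also have "\<dots> < \<delta>"
        using dist stability_const_pos[of L T] by (simp add: dist_commute field_simps)
      finally show ?thesis .
    qed
    hence "\<bar>F (?u \<phi>) - F (?u \<phi>')\<bar> < e"
      using \<delta> u[OF \<phi>'] by (auto simp: mild_solution_def)
    thus "dist (F (?u \<phi>')) (F (?u \<phi>)) < e" by (simp add: dist_real_def abs_minus_commute)
  qed
qed

lemma bounded_continuous_extension:
  fixes f :: "'a::metric_space \<Rightarrow> real"
  assumes S: "closed S" and f: "continuous_on S f" and C: "0 \<le> C"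
    and bounded: "\<And>x. x \<in> S \<Longrightarrow> \<bar>f x\<bar> \<le> C"
  obtains g where "continuous_on UNIV g" "\<And>x. x \<in> S \<Longrightarrow> g x = f x" "\<And>x. \<bar>g x\<bar> \<le> C"
proof -
  have "f x \<in> {-C..C}" if "x \<in> S" for x using bounded[OF that] by (simp add: abs_le_iff)
  hence "f ` S \<subseteq> {-C..C}" by (rule image_subsetI)
  then obtain g where g: "continuous_map euclidean euclideanreal g" "\<And>x. x \<in> S \<Longrightarrow> g x = f x"
    and g_bounded: "g ` topspace euclidean \<subseteq> {-C..C}"
  proof (rule Tietze_extension_closed_real_interval[rotated 3])
    show "normal_space (euclidean :: 'a topology)"
      by (rule metrizable_imp_normal_space[OF metrizable_space_euclidean])
    show "closedin euclidean S" using S by (simp only: closed_closedin)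
    show "continuous_map (subtopology euclidean S) euclideanreal f" using f by simp
    show "-C \<le> C" using C by simp
  qed blast
  show ?thesis
  proof (rule that[of g])
    show "continuous_on UNIV g" using g(1) by simp
    show "\<bar>g x\<bar> \<le> C" for x using subsetD[OF g_bounded, of "g x"] by (simp add: abs_le_iff)
  qed (rule g(2))
qed

lemma solution_functional_extension:
  assumes b: "L-lipschitz_on UNIV b" and T: "0 \<le> T" and F: "bdd_cont_functional T F"
  obtains H where "bdd_cont_functional T H" "\<And>f u. mild_solution T u0 b f u \<Longrightarrow> H f = F u"
proof -
  define S where "S = {\<phi>. \<exists>v. mild_solution T u0 b (apply_bcontfun \<phi>) v}"
  define \<Psi> where "\<Psi> = (\<lambda>\<phi>. F (SOME v. mild_solution T u0 b (apply_bcontfun \<phi>) v))"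
  obtain C where C: "\<And>f. continuous_on (rect T) f \<Longrightarrow> \<bar>F f\<bar> \<le> C"
    using F unfolding bdd_cont_functional_def by blast
  have \<Psi>_bounded: "\<bar>\<Psi> \<phi>\<bar> \<le> C" if "\<phi> \<in> S" for \<phi>
  proof -
    from that obtain v where "mild_solution T u0 b (apply_bcontfun \<phi>) v" unfolding S_def by blast
    from mild_solution_some[OF this] show ?thesis
      unfolding \<Psi>_def mild_solution_def by (intro C) simp
  qed
  obtain \<Psi>' where \<Psi>': "continuous_on UNIV \<Psi>'" and \<Psi>'_eq: "\<And>\<phi>. \<phi> \<in> S \<Longrightarrow> \<Psi>' \<phi> = \<Psi> \<phi>"
    and \<Psi>'_bounded: "\<And>\<phi>. \<bar>\<Psi>' \<phi>\<bar> \<le> C"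
  proof (rule bounded_continuous_extension)
    show "closed S" unfolding S_def by (rule closed_solvable_forcings[OF b T])
    show "continuous_on S \<Psi>" unfolding S_def \<Psi>_def by (rule continuous_on_solution_functional[OF b T F])
    show "0 \<le> C" by (rule order_trans[OF abs_ge_zero C[OF continuous_on_const]])
    show "\<bar>\<Psi> \<phi>\<bar> \<le> C" if "\<phi> \<in> S" for \<phi> using \<Psi>_bounded[OF that] .
  qed blast
  define H where "H f = (if \<exists>u. mild_solution T u0 b f u then F (SOME u. mild_solution T u0 b f u)
                         else \<Psi>' (rect_bcontfun T f))" for f
  have H_sol: "H f = F u" if "mild_solution T u0 b f u" for f u
    using functional_some_mild_solution[OF b T F that] that unfolding H_def by auto
  have H_eq: "H f = \<Psi>' (rect_bcontfun T f)" if f: "continuous_on (rect T) f" for f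
  proof (cases "\<exists>u. mild_solution T u0 b f u")
    case True
    then obtain u where u: "mild_solution T u0 b f u" ..
    hence u': "mild_solution T u0 b (apply_bcontfun (rect_bcontfun T f)) u"
      by (rule mild_solution_cong_forcing[rotated]) (simp add: apply_rect_bcontfun_rect[OF T f])
    hence "rect_bcontfun T f \<in> S" unfolding S_def by blast
    hence "\<Psi>' (rect_bcontfun T f) = F u"
      using \<Psi>'_eq functional_some_mild_solution[OF b T F u'] unfolding \<Psi>_def by simp
    thus ?thesis using H_sol[OF u] by simp
  qed (simp add: H_def)
  have "bdd_cont_functional T H"
    by (rule bdd_cont_functional_cong[OF bdd_cont_functional_comp_rect_bcontfun[OF T \<Psi>' \<Psi>'_bounded]
          H_eq])
  thus ?thesis using H_sol by (rule that)
qed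

lemma borel_measurable_completion_AE_cong:
  fixes f g :: "'a \<Rightarrow> real"
  assumes ae: "AE x in M. f x = g x" and f: "f \<in> borel_measurable (completion M)"
  shows "g \<in> borel_measurable (completion M)"
proof (rule measurableI)
  fix A :: "real set" assume "A \<in> sets borel"
  hence "f -` A \<inter> space (completion M) \<in> sets (completion M)" by (rule measurable_sets[OF f])
  thus "g -` A \<inter> space (completion M) \<in> sets (completion M)"
    by (rule completion.in_sets_AE[rotated]) (use AE_completion[OF ae] in auto)
qed auto

lemma integral_completion_cong_AE:
  fixes f g :: "'a \<Rightarrow> real"
  assumes ae: "AE x in M. f x = g x"
  shows "integral\<^sup>L (completion M) f = integral\<^sup>L (completion M) g"
proof (cases "f \<in> borel_measurable (completion M)")
  case True
  thus ?thesis
    by (intro integral_cong_AE borel_measurable_completion_AE_cong[OF ae] AE_completion[OF ae])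
next
  case False
  have "AE x in M. g x = f x" using ae by auto
  hence "g \<notin> borel_measurable (completion M)"
    using borel_measurable_completion_AE_cong False by blast
  hence "\<not> integrable (completion M) g" using borel_measurable_integrable by blast
  moreover have "\<not> integrable (completion M) f" using False borel_measurable_integrable by blast
  ultimately show ?thesis by (simp add: not_integrable_integral_eq)
qed

theorem theorem3p5:
  fixes T :: real
    and u0 :: "real \<Rightarrow> real" and b :: "real \<Rightarrow> real"
    and M :: "nat \<Rightarrow> 'a measure"
    and \<theta> :: "nat \<Rightarrow> 'a \<Rightarrow> real \<times> real \<Rightarrow> real"
    and Usol :: "nat \<Rightarrow> 'a \<Rightarrow> real \<times> real \<Rightarrow> real"
    and N :: "'b measure"
    and W X U :: "'b \<Rightarrow> real \<times> real \<Rightarrow> real"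
  assumes T_pos: "T > 0"
    and u0_cont: "continuous_on {0..1} u0"
    and b_lip: "\<exists>L. L-lipschitz_on UNIV b"
    and M_prob: "\<And>n. prob_space (M n)"
    and \<theta>_meas: "\<And>n. (\<lambda>(\<omega>, p). \<theta> n \<omega> p) \<in> borel_measurable (M n \<Otimes>\<^sub>M lborel)"
    and \<theta>_L2: "\<And>n. AE \<omega> in M n.
                   integrable lborel (\<lambda>p. indicator (rect T) p * (\<theta> n \<omega> p)\<^sup>2)"
    and N_prob: "prob_space N"
    and W_sheet: "brownian_sheet N T W"
    and X_wiener: "\<And>t x. (t, x) \<in> rect T \<Longrightarrow>
          wiener_integral N T W (\<lambda>(s, y). if s < t then heatG (t - s) x y else 0)
                          (\<lambda>\<omega>. X \<omega> (t, x))"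
    and X_cont: "AE \<omega> in N. continuous_on (rect T) (X \<omega>)"
    and conv_X: "conv_in_law_C T M (\<lambda>n \<omega>. heat_conv (\<theta> n \<omega>)) N X"
    and Un_sol: "\<And>n. AE \<omega> in M n. continuous_on (rect T) (Usol n \<omega>) \<and>
          (\<forall>t x. (t, x) \<in> rect T \<longrightarrow>
             Usol n \<omega> (t, x) = heat_sg u0 t x + heat_conv (\<lambda>p. b (Usol n \<omega> p)) (t, x)
                             + heat_conv (\<theta> n \<omega>) (t, x))"
    and U_adapted: "adapted_to N T W U"
    and U_sol: "AE \<omega> in N. continuous_on (rect T) (U \<omega>) \<and>
          (\<forall>t x. (t, x) \<in> rect T \<longrightarrow>
             U \<omega> (t, x) = heat_sg u0 t x + heat_conv (\<lambda>p. b (U \<omega> p)) (t, x) + X \<omega> (t, x))"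
  shows "conv_in_law_C T M Usol N U"
  unfolding conv_in_law_C_def
proof (intro allI impI)
  obtain L where b: "L-lipschitz_on UNIV b" using b_lip by blast
  have T: "0 \<le> T" using T_pos by simp
  fix F assume F: "bdd_cont_functional T F"
  obtain H where H: "bdd_cont_functional T H" and H_sol: "\<And>f u. mild_solution T u0 b f u \<Longrightarrow> H f = F u"
    using solution_functional_extension[OF b T F] by blast
  have "integral\<^sup>L (completion (M n)) (\<lambda>\<omega>. H (heat_conv (\<theta> n \<omega>)))
        = integral\<^sup>L (completion (M n)) (\<lambda>\<omega>. F (Usol n \<omega>))" for n
    by (rule integral_completion_cong_AE)
       (use Un_sol[of n] in \<open>auto intro!: H_sol simp: mild_solution_def\<close>)
  moreover have "integral\<^sup>L (completion N) (\<lambda>\<omega>. H (X \<omega>)) = integral\<^sup>L (completion N) (\<lambda>\<omega>. F (U \<omega>))"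
    by (rule integral_completion_cong_AE) (use U_sol in \<open>auto intro!: H_sol simp: mild_solution_def\<close>)
  moreover have "(\<lambda>n. integral\<^sup>L (completion (M n)) (\<lambda>\<omega>. H (heat_conv (\<theta> n \<omega>))))
                 \<longlonglongrightarrow> integral\<^sup>L (completion N) (\<lambda>\<omega>. H (X \<omega>))"
    using conv_X H unfolding conv_in_law_C_def by blast
  ultimately show "(\<lambda>n. integral\<^sup>L (completion (M n)) (\<lambda>\<omega>. F (Usol n \<omega>)))
                   \<longlonglongrightarrow> integral\<^sup>L (completion N) (\<lambda>\<omega>. F (U \<omega>))"
    by simp
qed

end
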